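(* Let $p$ be a prime and $n\ge2$, and let $l_1,\ldots,l_{n-1}$ be integers such that $l_{\alpha+\beta}\le l_\alpha+l_\beta$ for all $\alpha,\beta\ge1$ with $\alpha+\beta\le n-1$. Then $$\{B\in T_n^+(\mathbf{Q}_p): b_{j,k}\in p^{l_{k-j}}\mathbf{Z}_p\text{ when }j<k\}$$ is a compact open subring of $T_n^+(\mathbf{Q}_p)$, and $$\{A\in T^+(n,\mathbf{Q}_p): a_{j,k}\in p^{l_{k-j}}\mathbf{Z}_p\text{ when }j<k\}$$ is a compact open subgroup of $T^+(n,\mathbf{Q}_p)$. In particular $\{A\in T^+(n,\mathbf{Q}_p): \max_{j<k}|a_{j,k}|_p^{1/(k-j)}\le p^{-l}\}=\delta_{p^l}(T^+(n,\mathbf{Z}_p))$ is a compact open subgroup for each $l\in\mathbf{Z}$, and $T^+(n,\mathbf{Q}_p)$ has large compact open subgroups.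
   Context: $T_n^+(\mathbf{Q}_p)$ is the ring of strictly upper-triangular $n\times n$ matrices over $\mathbf{Q}_p$; $T^+(n,\mathbf{Q}_p)$ is the group of upper-triangular matrices with diagonal entries $1$, with the topology induced from $M_n(\mathbf{Q}_p)\cong\mathbf{Q}_p^{n^2}$; $T^+(n,\mathbf{Z}_p)$ is its subgroup with entries in $\mathbf{Z}_p$; $\delta_r$ multiplies the $(j,k)$ entry with $j<k$ by $r^{k-j}$. A topological group has large compact open subgroups if every compact subset is contained in a compact open subgroup. *)

theory Defs
  imports "HOL-Analysis.Analysis" "HOL-Algebra.Group"
begin

definition nonarch_absval :: "('a::field \<Rightarrow> real) \<Rightarrow> bool" where
  "nonarch_absval absv \<longleftrightarrow>
     (\<forall>x. absv x \<ge> 0) \<and> (\<forall>x. absv x = 0 \<longleftrightarrow> x = 0) \<and>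
     (\<forall>x y. absv (x * y) = absv x * absv y) \<and>
     (\<forall>x y. absv (x + y) \<le> max (absv x) (absv y))"

text \<open>(K, absv) is (a copy of) the field Q_p of p-adic numbers: the completion of Q
  with respect to the p-adic absolute value (normalised by |p| = 1/p).
  By Ostrowski's theorem such a field is isometrically isomorphic to Q_p.\<close>
definition padic_field :: "nat \<Rightarrow> ('a::field_char_0 \<Rightarrow> real) \<Rightarrow> bool" where
  "padic_field p absv \<longleftrightarrow>
     nonarch_absval absv \<and>
     absv (of_nat p) = 1 / real p \<and>
     (\<forall>X::nat \<Rightarrow> 'a. (\<forall>e>0. \<exists>N. \<forall>m\<ge>N. \<forall>k\<ge>N. absv (X m - X k) < e) \<longrightarrow>
          (\<exists>x. \<forall>e>0. \<exists>N. \<forall>m\<ge>N. absv (X m - x) < e)) \<and>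
     (\<forall>x e. e > 0 \<longrightarrow> (\<exists>q::rat. absv (x - of_rat q) < e))"

definition Zp :: "('a::field_char_0 \<Rightarrow> real) \<Rightarrow> 'a set" where
  "Zp absv = {x. absv x \<le> 1}"

definition pZp :: "nat \<Rightarrow> ('a::field_char_0 \<Rightarrow> real) \<Rightarrow> int \<Rightarrow> 'a set" where
  "pZp p absv l = (\<lambda>z. (of_nat p) powi l * z) ` Zp absv"

section \<open>n x n matrices, indexed by 1..n, as functions (entries outside are 0)\<close>

type_synonym 'a mat_fn = "nat \<Rightarrow> nat \<Rightarrow> 'a"

definition Mn :: "nat \<Rightarrow> ('a::zero) mat_fn set" where
  "Mn n = {A. \<forall>j k. A j k \<noteq> 0 \<longrightarrow> j \<in> {1..n} \<and> k \<in> {1..n}}"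

definition Tn_plus :: "nat \<Rightarrow> ('a::zero) mat_fn set" where
  "Tn_plus n = {B. \<forall>j k. B j k \<noteq> 0 \<longrightarrow> 1 \<le> j \<and> j < k \<and> k \<le> n}"

definition T_plus :: "nat \<Rightarrow> ('a::{zero,one}) mat_fn set" where
  "T_plus n = {A. \<forall>j k. A j k =
      (if j = k \<and> 1 \<le> j \<and> j \<le> n then 1
       else if 1 \<le> j \<and> j < k \<and> k \<le> n then A j k else 0)}"

definition mat_mult :: "nat \<Rightarrow> ('a::comm_ring_1) mat_fn \<Rightarrow> 'a mat_fn \<Rightarrow> 'a mat_fn" where
  "mat_mult n A B = (\<lambda>j k. \<Sum>i\<in>{1..n}. A j i * B i k)"

definition mat_one :: "nat \<Rightarrow> ('a::comm_ring_1) mat_fn" where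
  "mat_one n = (\<lambda>j k. if j = k \<and> 1 \<le> j \<and> j \<le> n then 1 else 0)"

definition mat_add :: "('a::comm_ring_1) mat_fn \<Rightarrow> 'a mat_fn \<Rightarrow> 'a mat_fn" where
  "mat_add A B = (\<lambda>j k. A j k + B j k)"

definition mat_neg :: "('a::comm_ring_1) mat_fn \<Rightarrow> 'a mat_fn" where
  "mat_neg A = (\<lambda>j k. - A j k)"

definition T_plus_group :: "nat \<Rightarrow> ('a::comm_ring_1) mat_fn monoid" where
  "T_plus_group n = \<lparr>carrier = T_plus n, mult = mat_mult n, one = mat_one n\<rparr>"

definition is_subring_Tn :: "nat \<Rightarrow> ('a::comm_ring_1) mat_fn set \<Rightarrow> bool" where
  "is_subring_Tn n S \<longleftrightarrow> S \<subseteq> Tn_plus n \<and> (\<lambda>j k. 0) \<in> S \<and>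
     (\<forall>A\<in>S. \<forall>B\<in>S. mat_add A B \<in> S \<and> mat_mult n A B \<in> S) \<and>
     (\<forall>A\<in>S. mat_neg A \<in> S)"

section \<open>Topology: M_n(Q_p) = Q_p^(n^2) with the product topology\<close>

definition Mn_top :: "('a::field_char_0 \<Rightarrow> real) \<Rightarrow> nat \<Rightarrow> 'a mat_fn topology" where
  "Mn_top absv n = topology (\<lambda>U. U \<subseteq> Mn n \<and>
     (\<forall>A\<in>U. \<exists>e>0. \<forall>B\<in>Mn n.
        (\<forall>j\<in>{1..n}. \<forall>k\<in>{1..n}. absv (B j k - A j k) < e) \<longrightarrow> B \<in> U))"

definition Tn_plus_top :: "('a::field_char_0 \<Rightarrow> real) \<Rightarrow> nat \<Rightarrow> 'a mat_fn topology" where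
  "Tn_plus_top absv n = subtopology (Mn_top absv n) (Tn_plus n)"

definition T_plus_top :: "('a::field_char_0 \<Rightarrow> real) \<Rightarrow> nat \<Rightarrow> 'a mat_fn topology" where
  "T_plus_top absv n = subtopology (Mn_top absv n) (T_plus n)"

definition has_large_compact_open_subgroups :: "'g topology \<Rightarrow> ('g, 'b) monoid_scheme \<Rightarrow> bool" where
  "has_large_compact_open_subgroups X G \<longleftrightarrow>
     (\<forall>K. compactin X K \<longrightarrow>
        (\<exists>H. subgroup H G \<and> compactin X H \<and> openin X H \<and> K \<subseteq> H))"

definition delta :: "('a::comm_ring_1) \<Rightarrow> 'a mat_fn \<Rightarrow> 'a mat_fn" where
  "delta r A = (\<lambda>j k. if j < k then r ^ (k - j) * A j k else A j k)"

definition T_plus_Zp :: "('a::field_char_0 \<Rightarrow> real) \<Rightarrow> nat \<Rightarrow> 'a mat_fn set" where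
  "T_plus_Zp absv n = {A \<in> T_plus n. \<forall>j k. 1 \<le> j \<and> j < k \<and> k \<le> n \<longrightarrow> A j k \<in> Zp absv}"

end

theory Submission
  imports Defs
begin

text \<open>The hypothesis on \<open>l\<close> says that the radii \<open>\<rho>\<^sub>d = p\<^bsup>-l\<^sub>d\<^esub>\<close> are submultiplicative, so by the
  ultrametric inequality the strictly upper triangular matrices whose \<open>d\<close>-th superdiagonal has
  entries of absolute value at most \<open>\<rho>\<^sub>d\<close> form a subring \<open>R\<close>. Since \<open>R\<close> consists of nilpotent
  matrices, \<open>1 + R\<close> is a group: \<open>(1 - M)\<^sup>-\<^sup>1 = 1 + M + \<dots> + M\<^sup>n\<close>. Both sets are closed balls for
  an entrywise ultrametric, hence open, and they are compact because \<open>\<rat>\<^sub>p\<close> is complete and every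
  closed ball is covered by finitely many smaller ones. The sets \<open>\<delta>\<^bsub>p\<^sup>m\<^esub>(T\<^sup>+(n, \<int>\<^sub>p))\<close> are the
  case \<open>\<rho>\<^sub>d = p\<^bsup>-md\<^esub>\<close>, and a compact set, having bounded entries, lies in one of them.\<close>

section \<open>Matrix algebra\<close>

lemma Mn_outside_eq_0: "A \<in> Mn n \<Longrightarrow> \<not> (j \<in> {1..n} \<and> k \<in> {1..n}) \<Longrightarrow> A j k = 0"
  unfolding Mn_def by blast

lemma Mn_eqI:
  assumes "A \<in> Mn n" "B \<in> Mn n" "\<And>j k. j \<in> {1..n} \<Longrightarrow> k \<in> {1..n} \<Longrightarrow> A j k = B j k"
  shows "A = B"
proof (intro ext)
  fix j k
  show "A j k = B j k"
    using assms(3) Mn_outside_eq_0[OF assms(1)] Mn_outside_eq_0[OF assms(2)]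
    by (cases "j \<in> {1..n} \<and> k \<in> {1..n}") auto
qed

lemma Tn_plus_subset_Mn: "Tn_plus n \<subseteq> Mn n"
proof
  fix A assume A: "A \<in> Tn_plus n"
  have "j \<in> {1..n} \<and> k \<in> {1..n}" if "A j k \<noteq> 0" for j k
    using A that unfolding Tn_plus_def by fastforce
  then show "A \<in> Mn n"
    unfolding Mn_def by blast
qed

lemma T_plus_entry:
  assumes "A \<in> T_plus n" "\<not> (1 \<le> j \<and> j < k \<and> k \<le> n)"
  shows "A j k = (if j = k \<and> 1 \<le> j \<and> j \<le> n then 1 else 0)"
proof -
  have "A j k = (if j = k \<and> 1 \<le> j \<and> j \<le> n then 1
     else if 1 \<le> j \<and> j < k \<and> k \<le> n then A j k else 0)"
    using assms(1) unfolding T_plus_def by blast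
  then show ?thesis
    using assms(2) by (smt (verit))
qed

lemma T_plus_subset_Mn: "T_plus n \<subseteq> Mn n"
proof
  fix A assume A: "A \<in> T_plus n"
  have "j \<in> {1..n} \<and> k \<in> {1..n}" if "A j k \<noteq> 0" for j k
    using that T_plus_entry[OF A, of j k] by (cases "1 \<le> j \<and> j < k \<and> k \<le> n") (auto split: if_splits)
  then show "A \<in> Mn n"
    unfolding Mn_def by blast
qed

lemma finite_entries: "finite {R j k | j k. j \<in> {1..n::nat} \<and> k \<in> {1..n}}"
  by (rule finite_image_set2) simp_all

lemma mat_one_in_Mn: "mat_one n \<in> Mn n"
  unfolding mat_one_def Mn_def by auto

lemma mat_add_in_Mn: "A \<in> Mn n \<Longrightarrow> B \<in> Mn n \<Longrightarrow> mat_add A B \<in> Mn n"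
  unfolding Mn_def mat_add_def by (auto, (metis add.right_neutral)+)

lemma mat_mult_in_Mn:
  assumes "A \<in> Mn n" "B \<in> Mn n"
  shows "mat_mult n A B \<in> Mn n"
proof -
  have "mat_mult n A B j k = 0" if "\<not> (j \<in> {1..n} \<and> k \<in> {1..n})" for j k
    using that Mn_outside_eq_0[OF assms(1), of j] Mn_outside_eq_0[OF assms(2), of _ k]
    unfolding mat_mult_def by (metis (no_types, lifting) mult_not_zero sum.neutral)
  then show ?thesis
    unfolding Mn_def by blast
qed

lemma mat_mult_assoc: "mat_mult n (mat_mult n A B) C = mat_mult n A (mat_mult n B C)"
proof (intro ext)
  fix j k
  have "mat_mult n (mat_mult n A B) C j k = (\<Sum>i\<in>{1..n}. \<Sum>h\<in>{1..n}. A j h * B h i * C i k)"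
    unfolding mat_mult_def by (simp add: sum_distrib_right)
  also have "\<dots> = (\<Sum>h\<in>{1..n}. \<Sum>i\<in>{1..n}. A j h * B h i * C i k)"
    by (rule sum.swap)
  also have "\<dots> = mat_mult n A (mat_mult n B C) j k"
    unfolding mat_mult_def by (simp add: sum_distrib_left mult.assoc)
  finally show "mat_mult n (mat_mult n A B) C j k = mat_mult n A (mat_mult n B C) j k" .
qed

lemma mat_mult_add_distrib_right: "mat_mult n (mat_add A B) C = mat_add (mat_mult n A C) (mat_mult n B C)"
  unfolding mat_mult_def mat_add_def by (simp add: distrib_right sum.distrib)

lemma mat_mult_add_distrib_left: "mat_mult n A (mat_add B C) = mat_add (mat_mult n A B) (mat_mult n A C)"
  unfolding mat_mult_def mat_add_def by (simp add: distrib_left sum.distrib)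

lemma mat_neg_mult: "mat_mult n (mat_neg A) B = mat_neg (mat_mult n A B)"
  unfolding mat_mult_def mat_neg_def by (simp add: sum_negf)

lemma mat_mult_neg: "mat_mult n A (mat_neg B) = mat_neg (mat_mult n A B)"
  unfolding mat_mult_def mat_neg_def by (simp add: sum_negf)

lemma mat_mult_zero_right: "mat_mult n A (\<lambda>j k. 0) = (\<lambda>j k. 0)"
  unfolding mat_mult_def by simp

lemma mat_one_mult:
  assumes "A \<in> Mn n"
  shows "mat_mult n (mat_one n) A = A"
proof (intro ext)
  fix j k
  have "mat_mult n (mat_one n) A j k = (\<Sum>i\<in>{1..n}. if i = j then A i k else 0)"
    unfolding mat_mult_def mat_one_def by (intro sum.cong) auto
  then show "mat_mult n (mat_one n) A j k = A j k"
    using Mn_outside_eq_0[OF assms, of j k] by (cases "j \<in> {1..n}") auto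
qed

lemma mat_mult_one:
  assumes "A \<in> Mn n"
  shows "mat_mult n A (mat_one n) = A"
proof (intro ext)
  fix j k
  have "mat_mult n A (mat_one n) j k = (\<Sum>i\<in>{1..n}. if i = k then A j i else 0)"
    unfolding mat_mult_def mat_one_def by (intro sum.cong) auto
  then show "mat_mult n A (mat_one n) j k = A j k"
    using Mn_outside_eq_0[OF assms, of j k] by (cases "k \<in> {1..n}") auto
qed

primrec mat_pow :: "nat \<Rightarrow> ('a::comm_ring_1) mat_fn \<Rightarrow> nat \<Rightarrow> 'a mat_fn" where
  "mat_pow n M 0 = mat_one n"
| "mat_pow n M (Suc m) = mat_mult n M (mat_pow n M m)"

lemma mat_pow_in_Mn: "M \<in> Mn n \<Longrightarrow> mat_pow n M m \<in> Mn n"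
  by (induction m) (simp_all add: mat_one_in_Mn mat_mult_in_Mn)

lemma mat_pow_Suc':
  assumes "M \<in> Mn n"
  shows "mat_pow n M (Suc m) = mat_mult n (mat_pow n M m) M"
proof (induction m)
  case (Suc m)
  then show ?case
    by (metis mat_pow.simps(2) mat_mult_assoc)
qed (simp add: assms mat_one_mult mat_mult_one)

definition mat_geom_sum :: "nat \<Rightarrow> ('a::comm_ring_1) mat_fn \<Rightarrow> nat \<Rightarrow> 'a mat_fn" where
  "mat_geom_sum n M m = (\<lambda>j k. \<Sum>i<m. mat_pow n M i j k)"

lemma mat_geom_sum_Suc:
  "mat_geom_sum n M (Suc m) = mat_add (mat_geom_sum n M m) (mat_pow n M m)"
  unfolding mat_geom_sum_def mat_add_def by simp

lemma mat_geom_sum_telescope: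
  assumes "M \<in> Mn n"
  shows "mat_mult n (mat_add (mat_one n) (mat_neg M)) (mat_geom_sum n M m) = mat_add (mat_one n) (mat_neg (mat_pow n M m))"
    and "mat_mult n (mat_geom_sum n M m) (mat_add (mat_one n) (mat_neg M)) = mat_add (mat_one n) (mat_neg (mat_pow n M m))"
proof -
  have pow: "mat_pow n M i \<in> Mn n" for i
    using mat_pow_in_Mn[OF assms] .
  have step: "mat_add (mat_add (mat_one n) (mat_neg P)) (mat_add P (mat_neg Q)) = mat_add (mat_one n) (mat_neg Q)"
    for P Q :: "'a mat_fn"
    by (simp add: mat_add_def mat_neg_def)
  have zero: "mat_geom_sum n M 0 = (\<lambda>j k. 0)" "mat_add (mat_one n) (mat_neg (mat_one n)) = (\<lambda>j k. 0)"
    by (simp_all add: mat_geom_sum_def mat_add_def mat_neg_def)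
  show "mat_mult n (mat_add (mat_one n) (mat_neg M)) (mat_geom_sum n M m) = mat_add (mat_one n) (mat_neg (mat_pow n M m))"
  proof (induction m)
    case (Suc m)
    have "mat_mult n (mat_add (mat_one n) (mat_neg M)) (mat_pow n M m) = mat_add (mat_pow n M m) (mat_neg (mat_pow n M (Suc m)))"
      by (simp add: mat_mult_add_distrib_right mat_neg_mult mat_one_mult[OF pow])
    then show ?case
      by (simp only: mat_geom_sum_Suc mat_mult_add_distrib_left Suc.IH step)
  qed (simp add: zero mat_mult_zero_right)
  show "mat_mult n (mat_geom_sum n M m) (mat_add (mat_one n) (mat_neg M)) = mat_add (mat_one n) (mat_neg (mat_pow n M m))"
  proof (induction m)
    case (Suc m)
    have "mat_mult n (mat_pow n M m) (mat_add (mat_one n) (mat_neg M)) = mat_add (mat_pow n M m) (mat_neg (mat_pow n M (Suc m)))"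
      by (simp only: mat_mult_add_distrib_left mat_mult_neg mat_mult_one[OF pow] mat_pow_Suc'[OF assms])
    then show ?case
      by (simp only: mat_geom_sum_Suc mat_mult_add_distrib_right Suc.IH step)
  qed (simp add: zero mat_mult_def)
qed

lemma mat_pow_Tn_plus_nonzero:
  assumes "N \<in> Tn_plus n" "mat_pow n N m j k \<noteq> 0"
  shows "1 \<le> j \<and> j + m \<le> k \<and> k \<le> n"
  using assms(2)
proof (induction m arbitrary: j k)
  case 0
  then show ?case
    by (simp add: mat_one_def split: if_splits)
next
  case (Suc m)
  then have "(\<Sum>h\<in>{1..n}. N j h * mat_pow n N m h k) \<noteq> 0"
    by (simp add: mat_mult_def)
  then obtain h where "N j h * mat_pow n N m h k \<noteq> 0"
    by (meson sum.neutral)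
  then have "N j h \<noteq> 0" "mat_pow n N m h k \<noteq> 0"
    by auto
  moreover from this(1) have "1 \<le> j \<and> j < h \<and> h \<le> n"
    using assms(1) unfolding Tn_plus_def by blast
  ultimately show ?case
    using Suc.IH by fastforce
qed

lemma mat_pow_Tn_plus_eq_0:
  assumes "N \<in> Tn_plus n" "n \<le> m"
  shows "mat_pow n N m = (\<lambda>j k. 0)"
proof (intro ext)
  fix j k
  show "mat_pow n N m j k = 0"
    using mat_pow_Tn_plus_nonzero[OF assms(1), of m j k] assms(2) by linarith
qed

text \<open>For \<open>C\<close> vanishing above the diagonal this is the coset \<open>C + T\<^sub>n\<^sup>+\<close>; the cases \<open>C = 0\<close> and
  \<open>C = 1\<close> give \<open>T\<^sub>n\<^sup>+\<close> and \<open>T\<^sup>+(n)\<close>.\<close>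

definition strict_upper_coset :: "nat \<Rightarrow> ('a::zero) mat_fn \<Rightarrow> 'a mat_fn set" where
  "strict_upper_coset n C = {A \<in> Mn n. \<forall>j\<in>{1..n}. \<forall>k\<in>{1..n}. k \<le> j \<longrightarrow> A j k = C j k}"

lemma Tn_plus_eq_coset: "Tn_plus n = strict_upper_coset n (\<lambda>j k. 0)"
proof (intro equalityI subsetI)
  fix A assume "A \<in> Tn_plus n"
  then show "A \<in> strict_upper_coset n (\<lambda>j k. 0)"
    using Tn_plus_subset_Mn unfolding strict_upper_coset_def Tn_plus_def by fastforce
next
  fix A assume A: "A \<in> strict_upper_coset n (\<lambda>j k. 0)"
  have "1 \<le> j \<and> j < k \<and> k \<le> n" if "A j k \<noteq> 0" for j k
  proof -
    have "A \<in> Mn n"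
      using A unfolding strict_upper_coset_def by blast
    then have "j \<in> {1..n} \<and> k \<in> {1..n}"
      using Mn_outside_eq_0 that by blast
    moreover have "\<not> k \<le> j"
      using A that calculation unfolding strict_upper_coset_def by blast
    ultimately show ?thesis
      by simp
  qed
  then show "A \<in> Tn_plus n"
    unfolding Tn_plus_def by blast
qed

lemma T_plus_eq_coset: "T_plus n = strict_upper_coset n (mat_one n :: ('a::comm_ring_1) mat_fn)"
proof (intro equalityI subsetI)
  fix A :: "'a mat_fn" assume A: "A \<in> T_plus n"
  have "A j k = mat_one n j k" if "k \<le> j" for j k
    using T_plus_entry[OF A, of j k] that by (simp add: mat_one_def)
  then show "A \<in> strict_upper_coset n (mat_one n)"
    using A T_plus_subset_Mn unfolding strict_upper_coset_def by blast
next
  fix A :: "'a mat_fn" assume A: "A \<in> strict_upper_coset n (mat_one n)"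
  have "A j k = (if j = k \<and> 1 \<le> j \<and> j \<le> n then 1
      else if 1 \<le> j \<and> j < k \<and> k \<le> n then A j k else 0)" for j k
    using A Mn_outside_eq_0[of A n j k] unfolding strict_upper_coset_def mat_one_def
    by (cases "j \<in> {1..n} \<and> k \<in> {1..n}") auto
  then show "A \<in> T_plus n"
    unfolding T_plus_def by blast
qed

lemma strict_upper_coset_translate:
  assumes "D \<in> Mn n"
  shows "mat_add D ` strict_upper_coset n C = strict_upper_coset n (mat_add D C)"
proof (intro equalityI subsetI)
  fix B assume "B \<in> mat_add D ` strict_upper_coset n C"
  then obtain A where A: "A \<in> strict_upper_coset n C" "B = mat_add D A"
    by blast
  then have "B \<in> Mn n"
    using assms mat_add_in_Mn unfolding strict_upper_coset_def by blast
  then show "B \<in> strict_upper_coset n (mat_add D C)"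
    using A unfolding strict_upper_coset_def mat_add_def by simp
next
  fix B assume B: "B \<in> strict_upper_coset n (mat_add D C)"
  have "mat_neg D \<in> Mn n"
    using assms unfolding Mn_def mat_neg_def by simp
  then have "mat_add B (mat_neg D) \<in> Mn n"
    using B mat_add_in_Mn unfolding strict_upper_coset_def by blast
  then have "mat_add B (mat_neg D) \<in> strict_upper_coset n C"
    using B unfolding strict_upper_coset_def mat_add_def mat_neg_def by simp
  moreover have "B = mat_add D (mat_add B (mat_neg D))"
    by (simp add: mat_add_def mat_neg_def)
  ultimately show "B \<in> mat_add D ` strict_upper_coset n C"
    by blast
qed

lemma T_plus_eq_image: "T_plus n = mat_add (mat_one n) ` (Tn_plus n :: ('a::comm_ring_1) mat_fn set)"
  unfolding T_plus_eq_coset Tn_plus_eq_coset strict_upper_coset_translate[OF mat_one_in_Mn]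
  by (simp add: mat_add_def)

lemma Tn_plus_is_subring: "is_subring_Tn n (Tn_plus n :: ('a::comm_ring_1) mat_fn set)"
  unfolding is_subring_Tn_def
proof (intro conjI ballI subset_refl)
  fix A B :: "'a mat_fn" assume A: "A \<in> Tn_plus n" and B: "B \<in> Tn_plus n"
  show "mat_add A B \<in> Tn_plus n"
    unfolding Tn_plus_def
  proof (intro CollectI allI impI)
    fix j k assume "mat_add A B j k \<noteq> 0"
    then have "A j k \<noteq> 0 \<or> B j k \<noteq> 0"
      by (auto simp: mat_add_def)
    then show "1 \<le> j \<and> j < k \<and> k \<le> n"
      using A B unfolding Tn_plus_def by blast
  qed
  show "mat_mult n A B \<in> Tn_plus n"
    unfolding Tn_plus_def
  proof (intro CollectI allI impI)
    fix j k assume "mat_mult n A B j k \<noteq> 0"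
    then obtain h where "A j h * B h k \<noteq> 0"
      unfolding mat_mult_def by (meson sum.neutral)
    then have "A j h \<noteq> 0" "B h k \<noteq> 0"
      by auto
    then show "1 \<le> j \<and> j < k \<and> k \<le> n"
      using A B unfolding Tn_plus_def by fastforce
  qed
next
  show "(\<lambda>j k. 0) \<in> (Tn_plus n :: 'a mat_fn set)"
    unfolding Tn_plus_def by simp
  fix A :: "'a mat_fn" assume "A \<in> Tn_plus n"
  then show "mat_neg A \<in> Tn_plus n"
    unfolding Tn_plus_def mat_neg_def by simp
qed

lemma subring_subset_Mn: "is_subring_Tn n R \<Longrightarrow> R \<subseteq> Mn n"
  unfolding is_subring_Tn_def using Tn_plus_subset_Mn by blast

lemma one_plus_subring_mult_closed:
  assumes R: "is_subring_Tn n R" and "A \<in> mat_add (mat_one n) ` R" "B \<in> mat_add (mat_one n) ` R"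
  shows "mat_mult n A B \<in> mat_add (mat_one n) ` R"
proof -
  obtain N N' where N: "N \<in> R" "A = mat_add (mat_one n) N" and N': "N' \<in> R" "B = mat_add (mat_one n) N'"
    using assms(2,3) by blast
  have NM: "N \<in> Mn n" "N' \<in> Mn n"
    using N(1) N'(1) subring_subset_Mn[OF R] by auto
  have "mat_mult n A B = mat_add (mat_add (mat_one n) N) (mat_add N' (mat_mult n N N'))"
    unfolding N(2) N'(2) mat_mult_add_distrib_right mat_mult_add_distrib_left
    by (simp only: mat_one_mult mat_one_in_Mn mat_add_in_Mn NM mat_mult_one)
  also have "\<dots> = mat_add (mat_one n) (mat_add N (mat_add N' (mat_mult n N N')))"
    by (simp add: mat_add_def add.assoc)
  finally have "mat_mult n A B = \<dots>" .
  moreover have "mat_add N (mat_add N' (mat_mult n N N')) \<in> R"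
    using R N(1) N'(1) unfolding is_subring_Tn_def by blast
  ultimately show ?thesis
    by blast
qed

lemma mat_one_in_one_plus_subring: "is_subring_Tn n R \<Longrightarrow> mat_one n \<in> mat_add (mat_one n) ` R"
  unfolding is_subring_Tn_def by (rule image_eqI[of _ _ "\<lambda>j k. 0"]) (auto simp: mat_add_def)

lemma mat_pow_Suc_in_subring:
  assumes R: "is_subring_Tn n R" and M: "M \<in> R"
  shows "mat_pow n M (Suc m) \<in> R"
proof (induction m)
  case 0
  show ?case
    using M subring_subset_Mn[OF R] by (auto simp: mat_mult_one)
next
  case (Suc m)
  then show ?case
    using R M unfolding is_subring_Tn_def by (simp only: mat_pow.simps(2)[of n M "Suc m"])
qed

lemma mat_geom_sum_Suc_in_one_plus_subring:
  assumes R: "is_subring_Tn n R" and M: "M \<in> R"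
  shows "mat_geom_sum n M (Suc m) \<in> mat_add (mat_one n) ` R"
proof (induction m)
  case 0
  show ?case
    using mat_one_in_one_plus_subring[OF R] by (simp add: mat_geom_sum_def)
next
  case (Suc m)
  then obtain Q where Q: "Q \<in> R" "mat_geom_sum n M (Suc m) = mat_add (mat_one n) Q"
    by blast
  have "mat_geom_sum n M (Suc (Suc m)) = mat_add (mat_one n) (mat_add Q (mat_pow n M (Suc m)))"
    unfolding mat_geom_sum_Suc[of n M "Suc m"] Q(2) by (simp add: mat_add_def add.assoc)
  moreover have "mat_add Q (mat_pow n M (Suc m)) \<in> R"
    using Q(1) mat_pow_Suc_in_subring[OF R M] R unfolding is_subring_Tn_def by blast
  ultimately show ?case
    by blast
qed

lemma one_plus_subring_inverse:
  assumes R: "is_subring_Tn n R" and A: "A \<in> mat_add (mat_one n) ` R"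
  shows "\<exists>Y \<in> mat_add (mat_one n) ` R. mat_mult n A Y = mat_one n \<and> mat_mult n Y A = mat_one n"
proof -
  obtain N where N: "N \<in> R" "A = mat_add (mat_one n) N"
    using A by blast
  define M where "M = mat_neg N"
  have M: "M \<in> R" "M \<in> Tn_plus n" "M \<in> Mn n"
    using R N(1) Tn_plus_subset_Mn unfolding M_def is_subring_Tn_def by blast+
  have "A = mat_add (mat_one n) (mat_neg M)"
    unfolding N(2) M_def mat_neg_def by simp
  moreover have "mat_add (mat_one n) (mat_neg (mat_pow n M (Suc n))) = mat_one n"
    unfolding mat_pow_Tn_plus_eq_0[OF M(2) le_SucI[OF order_refl]] by (simp add: mat_add_def mat_neg_def)
  ultimately show ?thesis
    using mat_geom_sum_telescope[OF M(3), of "Suc n"] mat_geom_sum_Suc_in_one_plus_subring[OF R M(1), of n]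
    by auto
qed

lemma T_plus_group_simps [simp]:
  "carrier (T_plus_group n) = T_plus n"
  "mult (T_plus_group n) = mat_mult n"
  "one (T_plus_group n) = mat_one n"
  unfolding T_plus_group_def by simp_all

lemma monoid_T_plus_group: "monoid (T_plus_group n :: ('a::comm_ring_1) mat_fn monoid)"
proof (rule monoidI, unfold T_plus_group_simps)
  fix A B :: "'a mat_fn" assume "A \<in> T_plus n" "B \<in> T_plus n"
  then show "mat_mult n A B \<in> T_plus n"
    unfolding T_plus_eq_image by (rule one_plus_subring_mult_closed[OF Tn_plus_is_subring])
next
  show "mat_one n \<in> (T_plus n :: 'a mat_fn set)"
    unfolding T_plus_eq_image by (rule mat_one_in_one_plus_subring[OF Tn_plus_is_subring])
next
  fix A :: "'a mat_fn" assume "A \<in> T_plus n"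
  then have "A \<in> Mn n"
    using T_plus_subset_Mn by blast
  then show "mat_mult n (mat_one n) A = A" "mat_mult n A (mat_one n) = A"
    by (simp_all add: mat_one_mult mat_mult_one)
qed (rule mat_mult_assoc)

lemma subgroup_one_plus_subring:
  assumes R: "is_subring_Tn n R"
  shows "subgroup (mat_add (mat_one n) ` R) (T_plus_group n)"
proof
  interpret monoid "T_plus_group n"
    by (rule monoid_T_plus_group)
  have sub: "mat_add (mat_one n) ` R \<subseteq> T_plus n"
    unfolding T_plus_eq_image using R unfolding is_subring_Tn_def by blast
  then show "mat_add (mat_one n) ` R \<subseteq> carrier (T_plus_group n)"
    by simp
  fix x y assume x: "x \<in> mat_add (mat_one n) ` R"
  {
    assume "y \<in> mat_add (mat_one n) ` R"
    then show "x \<otimes>\<^bsub>T_plus_group n\<^esub> y \<in> mat_add (mat_one n) ` R"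
      using one_plus_subring_mult_closed[OF R x] by simp
  }
  obtain Y where Y: "Y \<in> mat_add (mat_one n) ` R" "mat_mult n x Y = mat_one n" "mat_mult n Y x = mat_one n"
    using one_plus_subring_inverse[OF R x] by blast
  then have "Y = inv\<^bsub>T_plus_group n\<^esub> x"
    using x sub by (intro inv_unique') auto
  then show "inv\<^bsub>T_plus_group n\<^esub> x \<in> mat_add (mat_one n) ` R"
    using Y(1) by simp
next
  show "\<one>\<^bsub>T_plus_group n\<^esub> \<in> mat_add (mat_one n) ` R"
    using mat_one_in_one_plus_subring[OF R] by simp
qed

lemma delta_in_T_plus:
  assumes "A \<in> T_plus n"
  shows "delta r A \<in> T_plus n"
proof -
  have "A \<in> strict_upper_coset n (mat_one n)"
    using assms T_plus_eq_coset by blast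
  moreover have "delta r A \<in> Mn n" if "A \<in> Mn n"
  proof -
    have "A j k \<noteq> 0" if "delta r A j k \<noteq> 0" for j k
      using that unfolding delta_def by (auto split: if_splits)
    then show ?thesis
      using \<open>A \<in> Mn n\<close> unfolding Mn_def by blast
  qed
  ultimately show ?thesis
    unfolding T_plus_eq_coset strict_upper_coset_def delta_def by auto
qed

lemma delta_delta:
  assumes "c * c' = 1"
  shows "delta c (delta c' A) = A"
proof (intro ext)
  fix j k
  have "c ^ (k - j) * (c' ^ (k - j) * A j k) = A j k"
    using assms by (simp add: mult.assoc[symmetric] power_mult_distrib[symmetric])
  then show "delta c (delta c' A) j k = A j k"
    unfolding delta_def by simp
qed

section \<open>Nonarchimedean absolute values and the entrywise topology\<close>

locale nonarch_field =
  fixes absv :: "'a::field_char_0 \<Rightarrow> real"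
  assumes nonarch_absval: "nonarch_absval absv"
begin

lemma absv_nonneg [simp]: "0 \<le> absv x"
  and absv_eq_0_iff [simp]: "absv x = 0 \<longleftrightarrow> x = 0"
  and absv_mult: "absv (x * y) = absv x * absv y"
  and absv_add_le_max: "absv (x + y) \<le> max (absv x) (absv y)"
  using nonarch_absval unfolding nonarch_absval_def by blast+

lemma absv_zero [simp]: "absv 0 = 0"
  by simp

lemma absv_one [simp]: "absv 1 = 1"
  using absv_mult[of 1 1] by simp

lemma absv_minus [simp]: "absv (- x) = absv x"
proof -
  have "absv (-1) * absv (-1) = 1"
    using absv_mult[of "-1" "-1"] by simp
  then have "absv (-1) = 1"
    by (metis absv_nonneg abs_of_nonneg abs_square_eq_1 power2_eq_square)
  then show ?thesis
    using absv_mult[of "-1" x] by simp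
qed

lemma absv_minus_commute: "absv (x - y) = absv (y - x)"
  by (metis absv_minus minus_diff_eq)

lemma absv_diff_le_max: "absv (x - z) \<le> max (absv (x - y)) (absv (y - z))"
  using absv_add_le_max[of "x - y" "y - z"] by simp

lemma absv_diff_triangle: "absv (x - z) \<le> absv (x - y) + absv (y - z)"
  using absv_diff_le_max[of x z y] absv_nonneg[of "x - y"] absv_nonneg[of "y - z"] by linarith

lemma absv_inverse: "absv (inverse x) = inverse (absv x)"
proof (cases "x = 0")
  case False
  then have "absv x * absv (inverse x) = 1"
    using absv_mult[of x "inverse x"] by simp
  then show ?thesis
    by (rule inverse_unique[symmetric])
qed simp

lemma absv_power: "absv (x ^ k) = absv x ^ k"
  by (induction k) (simp_all add: absv_mult)

lemma absv_power_int: "absv (x powi k) = absv x powi k"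
  by (simp add: power_int_def absv_power absv_inverse)

lemma absv_of_nat_le_1: "absv (of_nat k) \<le> 1"
proof (induction k)
  case (Suc k)
  then show ?case
    using absv_add_le_max[of 1 "of_nat k"] by simp
qed simp

lemma absv_of_int_le_1: "absv (of_int k) \<le> 1"
  using absv_of_nat_le_1[of "nat \<bar>k\<bar>"] by (cases "k \<ge> 0") (simp_all add: of_nat_nat)

lemma absv_sum_le:
  assumes "finite I" "0 \<le> c" "\<And>i. i \<in> I \<Longrightarrow> absv (f i) \<le> c"
  shows "absv (sum f I) \<le> c"
  using assms
proof (induction I rule: finite_induct)
  case (insert i I)
  then have "absv (f i) \<le> c" "absv (sum f I) \<le> c"
    by simp_all
  then show ?case
    using absv_add_le_max[of "f i" "sum f I"] insert.hyps by simp
qed simp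

definition mat_dist :: "nat \<Rightarrow> 'a mat_fn \<Rightarrow> 'a mat_fn \<Rightarrow> real" where
  "mat_dist n A B = (\<Sum>j\<in>{1..n}. \<Sum>k\<in>{1..n}. absv (A j k - B j k))"

lemma absv_entry_le_mat_dist:
  assumes "j \<in> {1..n}" "k \<in> {1..n}"
  shows "absv (A j k - B j k) \<le> mat_dist n A B"
proof -
  have "absv (A j k - B j k) \<le> (\<Sum>k\<in>{1..n}. absv (A j k - B j k))"
    using assms by (intro member_le_sum) auto
  also have "\<dots> \<le> mat_dist n A B"
    unfolding mat_dist_def using assms by (intro member_le_sum sum_nonneg) auto
  finally show ?thesis .
qed

lemma mat_dist_less:
  assumes "0 < \<epsilon>" "\<And>j k. j \<in> {1..n} \<Longrightarrow> k \<in> {1..n} \<Longrightarrow> absv (A j k - B j k) \<le> \<epsilon> / (real n * real n + 1)"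
  shows "mat_dist n A B < \<epsilon>"
proof -
  have "mat_dist n A B \<le> (\<Sum>j\<in>{1..n}. \<Sum>k\<in>{1..n}. \<epsilon> / (real n * real n + 1))"
    unfolding mat_dist_def using assms(2) by (intro sum_mono) auto
  also have "\<dots> = \<epsilon> * (real n * real n) / (real n * real n + 1)"
    by simp
  also have "\<dots> < \<epsilon>"
    using assms(1) by (simp add: pos_divide_less_eq add_pos_nonneg algebra_simps)
  finally show ?thesis .
qed

lemma Metric_space_mat_dist: "Metric_space (Mn n) (mat_dist n)"
proof
  fix A B C :: "'a mat_fn"
  show "0 \<le> mat_dist n A B"
    unfolding mat_dist_def by (intro sum_nonneg) simp
  show "mat_dist n A B = mat_dist n B A"
    unfolding mat_dist_def by (simp add: absv_minus_commute)
  show "mat_dist n A C \<le> mat_dist n A B + mat_dist n B C"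
    unfolding mat_dist_def sum.distrib[symmetric] by (intro sum_mono absv_diff_triangle)
  assume "A \<in> Mn n" "B \<in> Mn n"
  moreover have "A j k = B j k" if "mat_dist n A B = 0" "j \<in> {1..n}" "k \<in> {1..n}" for j k
    using absv_entry_le_mat_dist[OF that(2,3), of A B] that(1) absv_nonneg[of "A j k - B j k"] by simp
  ultimately show "mat_dist n A B = 0 \<longleftrightarrow> A = B"
    by (auto intro: Mn_eqI simp: mat_dist_def)
qed

lemma Mn_top_eq_mtopology: "Mn_top absv n = Metric_space.mtopology (Mn n) (mat_dist n)"
proof -
  interpret M: Metric_space "Mn n" "mat_dist n"
    by (rule Metric_space_mat_dist)
  define entrywise where "entrywise A U \<longleftrightarrow>
    (\<exists>e>0. \<forall>B\<in>Mn n. (\<forall>j\<in>{1..n}. \<forall>k\<in>{1..n}. absv (B j k - A j k) < e) \<longrightarrow> B \<in> U)" for A U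
  have "entrywise A U \<longleftrightarrow> (\<exists>r>0. M.mball A r \<subseteq> U)" if "A \<in> Mn n" for A U
  proof
    assume "entrywise A U"
    then obtain e where "e > 0" "\<And>B. B \<in> Mn n \<Longrightarrow> (\<forall>j\<in>{1..n}. \<forall>k\<in>{1..n}. absv (B j k - A j k) < e) \<Longrightarrow> B \<in> U"
      unfolding entrywise_def by blast
    moreover have "absv (B j k - A j k) < e" if "mat_dist n A B < e" "j \<in> {1..n}" "k \<in> {1..n}" for B j k
      using absv_entry_le_mat_dist[OF that(2,3), of A B] that(1) absv_minus_commute[of "B j k" "A j k"] by linarith
    ultimately show "\<exists>r>0. M.mball A r \<subseteq> U"
      by (metis M.in_mball subsetI)
  next
    assume "\<exists>r>0. M.mball A r \<subseteq> U"
    then obtain r where r: "r > 0" "M.mball A r \<subseteq> U"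
      by blast
    have "B \<in> U" if "B \<in> Mn n" "\<forall>j\<in>{1..n}. \<forall>k\<in>{1..n}. absv (B j k - A j k) < r / (real n * real n + 1)" for B
    proof -
      have "mat_dist n A B < r"
        using that(2) by (intro mat_dist_less r(1)) (simp add: absv_minus_commute less_imp_le)
      then show ?thesis
        using r(2) \<open>A \<in> Mn n\<close> that(1) by auto
    qed
    moreover have "r / (real n * real n + 1) > 0"
      using r(1) by (intro divide_pos_pos add_nonneg_pos) auto
    ultimately show "entrywise A U"
      unfolding entrywise_def by blast
  qed
  then have "(\<lambda>U. U \<subseteq> Mn n \<and> (\<forall>A\<in>U. entrywise A U)) = openin M.mtopology"
    unfolding M.openin_mtopology by blast
  then show ?thesis
    unfolding Mn_top_def entrywise_def by (simp add: openin_inverse)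
qed

lemma limitin_Mn_top_entrywise:
  assumes "\<And>m. \<sigma> m \<in> Mn n" "L \<in> Mn n"
    and "\<And>j k e. j \<in> {1..n} \<Longrightarrow> k \<in> {1..n} \<Longrightarrow> 0 < e \<Longrightarrow> \<exists>N. \<forall>m\<ge>N. absv (\<sigma> m j k - L j k) < e"
  shows "limitin (Mn_top absv n) \<sigma> L sequentially"
proof -
  interpret M: Metric_space "Mn n" "mat_dist n"
    by (rule Metric_space_mat_dist)
  have "\<forall>\<^sub>F m in sequentially. mat_dist n (\<sigma> m) L < \<epsilon>" if "0 < \<epsilon>" for \<epsilon>
  proof -
    define \<delta> where "\<delta> = \<epsilon> / (real n * real n + 1)"
    have "0 < \<delta>"
      unfolding \<delta>_def using that by (intro divide_pos_pos add_nonneg_pos) auto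
    have "\<forall>\<^sub>F m in sequentially. absv (\<sigma> m j k - L j k) \<le> \<delta>" if "(j, k) \<in> {1..n} \<times> {1..n}" for j k
      using assms(3)[OF _ _ \<open>0 < \<delta>\<close>, of j k] that
      unfolding eventually_sequentially by (auto intro: less_imp_le)
    then have "\<forall>\<^sub>F m in sequentially. \<forall>jk\<in>{1..n} \<times> {1..n}. absv (\<sigma> m (fst jk) (snd jk) - L (fst jk) (snd jk)) \<le> \<delta>"
      by (intro eventually_ball_finite) auto
    then show ?thesis
      by (rule eventually_mono) (auto intro!: mat_dist_less that simp: \<delta>_def)
  qed
  then show ?thesis
    unfolding Mn_top_eq_mtopology M.limitin_metric using assms(1,2) by simp
qed

definition entry_ball :: "nat \<Rightarrow> 'a mat_fn \<Rightarrow> (nat \<Rightarrow> nat \<Rightarrow> real) \<Rightarrow> 'a mat_fn set" where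
  "entry_ball n C R = {A \<in> Mn n. \<forall>j\<in>{1..n}. \<forall>k\<in>{1..n}. absv (A j k - C j k) \<le> R j k}"

lemma entry_ball_subset_Mn: "entry_ball n C R \<subseteq> Mn n"
  unfolding entry_ball_def by blast

lemma closedin_entry_ball: "closedin (Mn_top absv n) (entry_ball n C R)"
proof -
  interpret M: Metric_space "Mn n" "mat_dist n"
    by (rule Metric_space_mat_dist)
  have "\<exists>r>0. M.mball A r \<subseteq> Mn n - entry_ball n C R" if A: "A \<in> Mn n - entry_ball n C R" for A
  proof -
    obtain j k where jk: "j \<in> {1..n}" "k \<in> {1..n}" "R j k < absv (A j k - C j k)"
      using A unfolding entry_ball_def by force
    have "B \<notin> entry_ball n C R" if "mat_dist n A B < absv (A j k - C j k) - R j k" for B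
    proof -
      have "R j k < absv (B j k - C j k)"
        using absv_entry_le_mat_dist[OF jk(1,2), of A B] absv_diff_triangle[of "A j k" "C j k" "B j k"] that
        by linarith
      then show ?thesis
        using jk(1,2) unfolding entry_ball_def by force
    qed
    then show ?thesis
      using jk(3) by (intro exI[of _ "absv (A j k - C j k) - R j k"]) auto
  qed
  then show ?thesis
    unfolding Mn_top_eq_mtopology closedin_def M.openin_mtopology by (auto simp: entry_ball_def)
qed

text \<open>Ultrametric closed balls are open: every point of a ball is one of its centres.\<close>

lemma openin_entry_ball:
  assumes "\<And>j k. j \<in> {1..n} \<Longrightarrow> k \<in> {1..n} \<Longrightarrow> 0 < R j k"
  shows "openin (Mn_top absv n) (entry_ball n C R)"
proof -
  interpret M: Metric_space "Mn n" "mat_dist n"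
    by (rule Metric_space_mat_dist)
  define r where "r = Min (insert 1 {R j k | j k. j \<in> {1..n} \<and> k \<in> {1..n}})"
  have fin: "finite {R j k | j k. j \<in> {1..n} \<and> k \<in> {1..n}}"
    by (rule finite_entries)
  have r: "0 < r" "\<And>j k. j \<in> {1..n} \<Longrightarrow> k \<in> {1..n} \<Longrightarrow> r \<le> R j k"
    unfolding r_def using fin assms by (auto intro!: Min_le)
  have "M.mball A r \<subseteq> entry_ball n C R" if "A \<in> entry_ball n C R" for A
  proof
    fix B assume B: "B \<in> M.mball A r"
    have "absv (B j k - C j k) \<le> R j k" if "j \<in> {1..n}" "k \<in> {1..n}" for j k
    proof -
      have "absv (B j k - A j k) < R j k"
        using absv_entry_le_mat_dist[OF that, of A B] B r(2)[OF that]
        by (simp add: absv_minus_commute[of "B j k"])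
      moreover have "absv (A j k - C j k) \<le> R j k"
        using \<open>A \<in> entry_ball n C R\<close> that unfolding entry_ball_def by blast
      ultimately show ?thesis
        using absv_diff_le_max[of "B j k" "C j k" "A j k"] by linarith
    qed
    then show "B \<in> entry_ball n C R"
      using B unfolding entry_ball_def by simp
  qed
  then show ?thesis
    unfolding Mn_top_eq_mtopology M.openin_mtopology using r(1) entry_ball_subset_Mn by blast
qed

lemma entry_ball_finite_net:
  assumes F: "finite F" "\<And>y. y \<in> F \<Longrightarrow> absv y \<le> \<rho>" "\<And>x. absv x \<le> \<rho> \<Longrightarrow> \<exists>y\<in>F. absv (x - y) < \<delta>"
  shows "\<exists>G. finite G \<and> G \<subseteq> entry_ball n C (\<lambda>j k. \<rho>) \<and>
    (\<forall>A\<in>entry_ball n C (\<lambda>j k. \<rho>). \<exists>B\<in>G. \<forall>j\<in>{1..n}. \<forall>k\<in>{1..n}. absv (B j k - A j k) < \<delta>)"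
proof -
  define grid where "grid = (\<lambda>f j k. if j \<in> {1..n} \<and> k \<in> {1..n} then C j k + f (j, k) else 0) `
    PiE ({1..n} \<times> {1..n}) (\<lambda>_. F)"
  have "finite grid"
    unfolding grid_def using F(1) by (intro finite_imageI finite_PiE) auto
  moreover have "grid \<subseteq> entry_ball n C (\<lambda>j k. \<rho>)"
  proof
    fix G assume "G \<in> grid"
    then obtain g where g: "g \<in> PiE ({1..n} \<times> {1..n}) (\<lambda>_. F)"
      "G = (\<lambda>j k. if j \<in> {1..n} \<and> k \<in> {1..n} then C j k + g (j, k) else 0)"
      unfolding grid_def by blast
    have "G \<in> Mn n"
      unfolding g(2) Mn_def by simp
    moreover have "absv (G j k - C j k) \<le> \<rho>" if "j \<in> {1..n}" "k \<in> {1..n}" for j k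
      using that F(2) PiE_mem[OF g(1), of "(j, k)"] unfolding g(2) by simp
    ultimately show "G \<in> entry_ball n C (\<lambda>j k. \<rho>)"
      unfolding entry_ball_def by blast
  qed
  moreover have "\<exists>G\<in>grid. \<forall>j\<in>{1..n}. \<forall>k\<in>{1..n}. absv (G j k - A j k) < \<delta>"
    if A: "A \<in> entry_ball n C (\<lambda>j k. \<rho>)" for A
  proof -
    have "\<forall>jk\<in>{1..n} \<times> {1..n}. \<exists>y. y \<in> F \<and> absv (A (fst jk) (snd jk) - C (fst jk) (snd jk) - y) < \<delta>"
    proof
      fix jk assume "jk \<in> {1..n} \<times> {1..n}"
      then have "fst jk \<in> {1..n}" "snd jk \<in> {1..n}"
        by auto
      then have "absv (A (fst jk) (snd jk) - C (fst jk) (snd jk)) \<le> \<rho>"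
        using A unfolding entry_ball_def by blast
      then show "\<exists>y. y \<in> F \<and> absv (A (fst jk) (snd jk) - C (fst jk) (snd jk) - y) < \<delta>"
        using F(3) by blast
    qed
    then obtain f where f: "\<forall>jk\<in>{1..n} \<times> {1..n}. f jk \<in> F \<and> absv (A (fst jk) (snd jk) - C (fst jk) (snd jk) - f jk) < \<delta>"
      by (metis bchoice)
    define G where "G = (\<lambda>j k. if j \<in> {1..n} \<and> k \<in> {1..n} then C j k + restrict f ({1..n} \<times> {1..n}) (j, k) else 0)"
    have "G \<in> grid"
      unfolding grid_def G_def using f by (intro image_eqI[of _ _ "restrict f ({1..n} \<times> {1..n})"]) auto
    moreover have "absv (G j k - A j k) < \<delta>" if "j \<in> {1..n}" "k \<in> {1..n}" for j k
    proof -
      have "(j, k) \<in> {1..n} \<times> {1..n}" "G j k = C j k + f (j, k)"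
        using that unfolding G_def by simp_all
      then show ?thesis
        using bspec[OF f, of "(j, k)"] absv_minus_commute[of "G j k" "A j k"] by (simp add: algebra_simps)
    qed
    ultimately show ?thesis
      by blast
  qed
  ultimately show ?thesis
    by blast
qed

lemma compactin_entries_bounded:
  assumes "compactin (Mn_top absv n) K"
  obtains b where "\<And>A j k. A \<in> K \<Longrightarrow> j \<in> {1..n} \<Longrightarrow> k \<in> {1..n} \<Longrightarrow> absv (A j k) \<le> b"
proof -
  interpret M: Metric_space "Mn n" "mat_dist n"
    by (rule Metric_space_mat_dist)
  obtain C r where "K \<subseteq> M.mcball C r"
    using M.compactin_imp_mbounded assms unfolding Mn_top_eq_mtopology M.mbounded_def by blast
  then have "absv (A j k) \<le> r + mat_dist n C (\<lambda>j k. 0)"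
    if "A \<in> K" "j \<in> {1..n}" "k \<in> {1..n}" for A j k
    using that absv_entry_le_mat_dist[OF that(2,3), of C A] absv_entry_le_mat_dist[OF that(2,3), of C "\<lambda>j k. 0"]
      absv_diff_triangle[of "A j k" 0 "C j k"] absv_minus_commute[of "A j k" "C j k"]
    by force
  then show ?thesis
    using that by blast
qed

definition superdiag_bounded :: "nat \<Rightarrow> (nat \<Rightarrow> real) \<Rightarrow> 'a mat_fn set \<Rightarrow> 'a mat_fn set" where
  "superdiag_bounded n r T = {A \<in> T. \<forall>j k. 1 \<le> j \<and> j < k \<and> k \<le> n \<longrightarrow> absv (A j k) \<le> r (k - j)}"

lemma superdiag_bounded_subring:
  assumes nonneg: "\<And>d. 0 \<le> r d"
    and submult: "\<And>\<alpha> \<beta>. 1 \<le> \<alpha> \<Longrightarrow> 1 \<le> \<beta> \<Longrightarrow> \<alpha> + \<beta> \<le> n - 1 \<Longrightarrow> r \<alpha> * r \<beta> \<le> r (\<alpha> + \<beta>)"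
  shows "is_subring_Tn n (superdiag_bounded n r (Tn_plus n))"
proof -
  have T: "is_subring_Tn n (Tn_plus n :: 'a mat_fn set)"
    by (rule Tn_plus_is_subring)
  have entry: "absv (A j k) \<le> r (k - j)" if "A \<in> superdiag_bounded n r (Tn_plus n)" "1 \<le> j" "j < k" "k \<le> n" for A j k
    using that unfolding superdiag_bounded_def by blast
  have "absv (mat_mult n A B j k) \<le> r (k - j)"
    if A: "A \<in> superdiag_bounded n r (Tn_plus n)" and B: "B \<in> superdiag_bounded n r (Tn_plus n)"
      and jk: "1 \<le> j" "j < k" "k \<le> n" for A B j k
    unfolding mat_mult_def
  proof (intro absv_sum_le finite_atLeastAtMost nonneg)
    fix i
    show "absv (A j i * B i k) \<le> r (k - j)"
    proof (cases "A j i = 0 \<or> B i k = 0")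
      case False
      then have ji: "1 \<le> j \<and> j < i \<and> i \<le> n" and ik: "1 \<le> i \<and> i < k \<and> k \<le> n"
        using A B unfolding superdiag_bounded_def Tn_plus_def by blast+
      have "absv (A j i * B i k) \<le> r (i - j) * r (k - i)"
        unfolding absv_mult using entry[OF A] entry[OF B] ji ik nonneg by (intro mult_mono) auto
      also have "\<dots> \<le> r ((i - j) + (k - i))"
        using ji ik by (intro submult) auto
      also have "(i - j) + (k - i) = k - j"
        using ji ik by simp
      finally show ?thesis .
    qed (auto simp: nonneg)
  qed
  moreover have "absv (mat_add A B j k) \<le> r (k - j)"
    if "A \<in> superdiag_bounded n r (Tn_plus n)" "B \<in> superdiag_bounded n r (Tn_plus n)"
      "1 \<le> j" "j < k" "k \<le> n" for A B j k
    using entry[of A j k] entry[of B j k] that absv_add_le_max[of "A j k" "B j k"]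
    unfolding mat_add_def by simp
  ultimately show ?thesis
    using T nonneg unfolding is_subring_Tn_def superdiag_bounded_def by (auto simp: mat_neg_def)
qed

lemma superdiag_bounded_translate:
  assumes "\<And>j k. j < k \<Longrightarrow> C j k = 0"
  shows "superdiag_bounded n r (mat_add C ` T) = mat_add C ` superdiag_bounded n r T"
  using assms unfolding superdiag_bounded_def mat_add_def by auto

lemma superdiag_bounded_T_plus:
  "superdiag_bounded n r (T_plus n) = mat_add (mat_one n) ` superdiag_bounded n r (Tn_plus n)"
  unfolding T_plus_eq_image by (rule superdiag_bounded_translate) (simp add: mat_one_def)

lemma subgroup_superdiag_bounded:
  assumes "\<And>d. 0 \<le> r d"
    and "\<And>\<alpha> \<beta>. 1 \<le> \<alpha> \<Longrightarrow> 1 \<le> \<beta> \<Longrightarrow> \<alpha> + \<beta> \<le> n - 1 \<Longrightarrow> r \<alpha> * r \<beta> \<le> r (\<alpha> + \<beta>)"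
  shows "subgroup (superdiag_bounded n r (T_plus n)) (T_plus_group n)"
  unfolding superdiag_bounded_T_plus
  by (rule subgroup_one_plus_subring[OF superdiag_bounded_subring[OF assms]])

lemma coset_entry_dist:
  assumes "A \<in> strict_upper_coset n C" "\<And>j k. j < k \<Longrightarrow> C j k = 0" "j \<in> {1..n}" "k \<in> {1..n}"
  shows "absv (A j k - C j k) = (if j < k then absv (A j k) else 0)"
  using assms unfolding strict_upper_coset_def by (cases "j < k") auto

lemma superdiag_bounded_coset_iff:
  assumes "A \<in> strict_upper_coset n C" "\<And>j k. j < k \<Longrightarrow> C j k = 0"
  shows "A \<in> superdiag_bounded n r (strict_upper_coset n C) \<longleftrightarrow>
    (\<forall>j\<in>{1..n}. \<forall>k\<in>{1..n}. j < k \<longrightarrow> absv (A j k - C j k) \<le> r (k - j))"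
proof -
  have "(1 \<le> j \<and> j < k \<and> k \<le> n) \<longleftrightarrow> (j \<in> {1..n} \<and> k \<in> {1..n} \<and> j < k)" for j k
    by auto
  then show ?thesis
    using assms coset_entry_dist[OF assms] unfolding superdiag_bounded_def by auto
qed

lemma coset_in_entry_ball_iff:
  assumes "A \<in> strict_upper_coset n C" "\<And>j k. j < k \<Longrightarrow> C j k = 0" "0 \<le> R\<^sub>0"
  shows "A \<in> entry_ball n C (\<lambda>j k. if j < k then r (k - j) else R\<^sub>0) \<longleftrightarrow>
    (\<forall>j\<in>{1..n}. \<forall>k\<in>{1..n}. j < k \<longrightarrow> absv (A j k - C j k) \<le> r (k - j))"
proof -
  have pointwise: "absv (A j k - C j k) \<le> (if j < k then r (k - j) else R\<^sub>0) \<longleftrightarrow> (j < k \<longrightarrow> absv (A j k - C j k) \<le> r (k - j))"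
    if "j \<in> {1..n}" "k \<in> {1..n}" for j k
    using coset_entry_dist[OF assms(1,2) that] assms(3) by auto
  have "A \<in> Mn n"
    using assms(1) unfolding strict_upper_coset_def by blast
  then show ?thesis
    unfolding entry_ball_def using pointwise by blast
qed

lemma entry_ball_subset_coset:
  "entry_ball n C (\<lambda>j k. if j < k then r (k - j) else 0) \<subseteq> strict_upper_coset n C"
proof
  fix A assume A: "A \<in> entry_ball n C (\<lambda>j k. if j < k then r (k - j) else 0)"
  have "A j k = C j k" if "j \<in> {1..n}" "k \<in> {1..n}" "k \<le> j" for j k
  proof -
    have "\<forall>j\<in>{1..n}. \<forall>k\<in>{1..n}. absv (A j k - C j k) \<le> (if j < k then r (k - j) else 0)"
      using A unfolding entry_ball_def by blast
    then have "absv (A j k - C j k) \<le> (if j < k then r (k - j) else 0)"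
      using that(1,2) by blast
    then have "absv (A j k - C j k) \<le> 0"
      using that(3) by simp
    then show ?thesis
      using absv_nonneg[of "A j k - C j k"] by simp
  qed
  then show "A \<in> strict_upper_coset n C"
    using A unfolding entry_ball_def strict_upper_coset_def by blast
qed

lemma superdiag_bounded_coset_eq_Int:
  assumes "\<And>j k. j < k \<Longrightarrow> C j k = 0" "0 \<le> R\<^sub>0"
  shows "superdiag_bounded n r (strict_upper_coset n C)
    = strict_upper_coset n C \<inter> entry_ball n C (\<lambda>j k. if j < k then r (k - j) else R\<^sub>0)"
proof (intro Set.set_eqI)
  fix A
  show "A \<in> superdiag_bounded n r (strict_upper_coset n C) \<longleftrightarrow>
    A \<in> strict_upper_coset n C \<inter> entry_ball n C (\<lambda>j k. if j < k then r (k - j) else R\<^sub>0)"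
  proof (cases "A \<in> strict_upper_coset n C")
    case True
    then show ?thesis
      using superdiag_bounded_coset_iff[OF True assms(1)] coset_in_entry_ball_iff[OF True assms] by simp
  qed (simp add: superdiag_bounded_def)
qed

lemma superdiag_bounded_coset_eq_entry_ball:
  assumes "\<And>j k. j < k \<Longrightarrow> C j k = 0"
  shows "superdiag_bounded n r (strict_upper_coset n C) = entry_ball n C (\<lambda>j k. if j < k then r (k - j) else 0)"
proof -
  have "superdiag_bounded n r (strict_upper_coset n C)
    = strict_upper_coset n C \<inter> entry_ball n C (\<lambda>j k. if j < k then r (k - j) else 0)"
    by (rule superdiag_bounded_coset_eq_Int) (use assms in auto)
  then show ?thesis
    using entry_ball_subset_coset by blast
qed

lemma openin_superdiag_bounded:
  assumes "\<And>j k. j < k \<Longrightarrow> C j k = 0" "\<And>d. 0 < r d"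
  shows "openin (subtopology (Mn_top absv n) (strict_upper_coset n C)) (superdiag_bounded n r (strict_upper_coset n C))"
proof -
  have "openin (Mn_top absv n) (entry_ball n C (\<lambda>j k. if j < k then r (k - j) else 1))"
    by (rule openin_entry_ball) (simp add: assms(2))
  then show ?thesis
    using superdiag_bounded_coset_eq_Int[of C 1 n r] assms(1) unfolding openin_subtopology by auto
qed

end

section \<open>Compactness over \<open>\<rat>\<^sub>p\<close>\<close>

locale padic =
  fixes p :: nat and absv :: "'a::field_char_0 \<Rightarrow> real"
  assumes prime_p: "prime p" and padic_field: "padic_field p absv"

sublocale padic \<subseteq> nonarch_field absv
  using padic_field unfolding padic_field_def by unfold_locales blast

context padic
begin

lemma p_gt_1: "1 < p"
  using prime_p prime_gt_1_nat by blast

lemma absv_p: "absv (of_nat p) = 1 / real p"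
  using padic_field unfolding padic_field_def by (elim conjE) assumption

lemma absv_complete: "\<forall>X::nat \<Rightarrow> 'a. (\<forall>e>0. \<exists>N. \<forall>m\<ge>N. \<forall>k\<ge>N. absv (X m - X k) < e) \<longrightarrow>
      (\<exists>x. \<forall>e>0. \<exists>N. \<forall>m\<ge>N. absv (X m - x) < e)"
  using padic_field unfolding padic_field_def by (elim conjE) assumption

lemma rat_dense: "\<forall>x e. e > 0 \<longrightarrow> (\<exists>q::rat. absv (x - of_rat q) < e)"
  using padic_field unfolding padic_field_def by (elim conjE) assumption

lemma absv_p_powi: "absv (of_nat p powi L) = real p powr (- real_of_int L)"
proof -
  have "absv (of_nat p powi L) = inverse (real p) powi L"
    by (simp add: absv_power_int absv_p inverse_eq_divide)
  also have "\<dots> = real p powi (- L)"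
    by (simp add: power_int_inverse power_int_minus)
  also have "\<dots> = real p powr (- real_of_int L)"
    using p_gt_1 powr_real_of_int'[of "real p" "- L"] by simp
  finally show ?thesis .
qed

lemma pZp_iff: "x \<in> pZp p absv L \<longleftrightarrow> absv x \<le> real p powr (- real_of_int L)"
proof
  assume "x \<in> pZp p absv L"
  then show "absv x \<le> real p powr (- real_of_int L)"
    unfolding pZp_def Zp_def by (auto simp: absv_mult absv_p_powi mult_left_le)
next
  assume x: "absv x \<le> real p powr (- real_of_int L)"
  have p_powi: "(of_nat p :: 'a) powi L \<noteq> 0"
    using p_gt_1 by simp
  have "absv (of_nat p powi (- L) * x) = real p powr real_of_int L * absv x"
    by (simp add: absv_mult absv_p_powi)
  also have "\<dots> \<le> real p powr real_of_int L * real p powr (- real_of_int L)"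
    using x by (intro mult_left_mono) auto
  also have "\<dots> = 1"
    using p_gt_1 by (simp add: powr_add[symmetric])
  finally have "of_nat p powi (- L) * x \<in> Zp absv"
    unfolding Zp_def by simp
  moreover have "x = of_nat p powi L * (of_nat p powi (- L) * x)"
    using p_powi by (simp add: power_int_minus)
  ultimately show "x \<in> pZp p absv L"
    unfolding pZp_def by blast
qed

lemma absv_of_int_eq_1:
  assumes "\<not> int p dvd k"
  shows "absv (of_int k) = 1"
proof -
  have "coprime (int p) k"
    using assms prime_p by (simp add: prime_imp_coprime prime_nat_iff_prime)
  then obtain u v where uv: "u * int p + v * k = 1"
    by (metis bezout_int coprime_iff_gcd_eq_1)
  have "1 = absv (of_int u * of_nat p + of_int v * of_int k)"
    by (metis absv_one of_int_1 of_int_add of_int_mult of_int_of_nat_eq uv)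
  also have "\<dots> \<le> max (absv (of_int u * of_nat p)) (absv (of_int v * of_int k))"
    by (rule absv_add_le_max)
  also have "\<dots> \<le> max (1 / real p) (absv (of_int k))"
    using absv_of_int_le_1[of u] absv_of_int_le_1[of v]
    by (intro max.mono) (simp_all add: absv_mult absv_p divide_right_mono mult_left_le_one_le)
  finally have "1 \<le> max (1 / real p) (absv (of_int k))" .
  then show ?thesis
    using absv_of_int_le_1[of k] p_gt_1 by (simp add: max_def split: if_splits)
qed

lemma absv_of_int_le_if_dvd:
  assumes "int p ^ N dvd k"
  shows "absv (of_int k) \<le> (1 / real p) ^ N"
proof -
  obtain t where "k = int p ^ N * t"
    using assms by blast
  then have "absv (of_int k) = (1 / real p) ^ N * absv (of_int t)"
    by (simp add: absv_mult absv_power absv_p)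
  then show ?thesis
    using absv_of_int_le_1[of t] by (simp add: mult_left_le)
qed

lemma quotient_of_denom_not_dvd:
  assumes "absv (of_rat q) \<le> 1" "quotient_of q = (a, b)"
  shows "\<not> int p dvd b"
proof
  assume "int p dvd b"
  moreover have "coprime a b"
    using assms(2) quotient_of_coprime by blast
  ultimately have "\<not> int p dvd a"
    using p_gt_1 coprime_common_divisor by fastforce
  then have a: "absv (of_int a) = 1"
    by (rule absv_of_int_eq_1)
  have b: "0 < absv (of_int b)" "absv (of_int b) \<le> 1 / real p"
    using quotient_of_denom_pos[OF assms(2)] absv_of_int_le_if_dvd[of 1 b] \<open>int p dvd b\<close>
    by (auto simp: less_le)
  have q: "(of_rat q :: 'a) = of_int a / of_int b"
    using quotient_of_div[OF assms(2)] by (simp add: of_rat_divide)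
  have "real p \<le> 1 / absv (of_int b)"
    using b p_gt_1 by (simp add: le_divide_eq mult.commute pos_le_divide_eq)
  also have "\<dots> = absv (of_rat q)"
    using q a by (simp add: divide_inverse absv_mult absv_inverse)
  finally show False
    using assms(1) p_gt_1 by simp
qed

text \<open>Writing \<open>q = a/b\<close> with \<open>p \<nmid> b\<close>, the witness is \<open>a b\<^sup>-\<^sup>1\<close> reduced modulo \<open>p\<^sup>N\<close>.\<close>

lemma rat_approx_by_nat:
  assumes q: "absv (of_rat q :: 'a) \<le> 1"
  shows "\<exists>m < p ^ N. absv ((of_rat q :: 'a) - of_nat m) \<le> (1 / real p) ^ N"
proof -
  obtain a b where ab: "quotient_of q = (a, b)"
    by fastforce
  define P where "P = int p ^ N"
  have "coprime P b"
    using quotient_of_denom_not_dvd[OF q ab] prime_p unfolding P_def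
    by (simp add: prime_imp_coprime prime_nat_iff_prime coprime_power_left_iff)
  then obtain u c where uc: "u * P + c * b = 1"
    by (metis bezout_int coprime_iff_gcd_eq_1)
  have P_pos: "0 < P"
    unfolding P_def using p_gt_1 by simp
  define m where "m = nat ((a * c) mod P)"
  have m: "int m = (a * c) mod P"
    unfolding m_def using P_pos by simp
  then have "int m < int (p ^ N)"
    using pos_mod_bound[OF P_pos, of "a * c"] unfolding P_def by simp
  then have "m < p ^ N"
    by linarith
  have "a - b * int m = a * (u * P + c * b) - b * (a * c - P * ((a * c) div P))"
    using uc m by (simp add: minus_div_mult_eq_mod[symmetric] mult.commute)
  also have "\<dots> = P * (a * u + b * ((a * c) div P))"
    by (simp add: algebra_simps)
  finally have "P dvd a - b * int m"
    by simp
  have b: "absv (of_int b :: 'a) = 1" "(of_int b :: 'a) \<noteq> 0"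
    using absv_of_int_eq_1 quotient_of_denom_not_dvd[OF q ab] quotient_of_denom_pos[OF ab] by auto
  have "(of_rat q :: 'a) = of_int a / of_int b"
    using quotient_of_div[OF ab] by (simp add: of_rat_divide)
  then have "(of_rat q :: 'a) - of_nat m = of_int (a - b * int m) / of_int b"
    using b(2) by (simp add: field_simps)
  then have "absv ((of_rat q :: 'a) - of_nat m) \<le> (1 / real p) ^ N"
    using absv_of_int_le_if_dvd[of N "a - b * int m"] \<open>P dvd _\<close> b(1)
    unfolding P_def by (simp add: divide_inverse absv_mult absv_inverse)
  then show ?thesis
    using \<open>m < p ^ N\<close> by blast
qed

lemma Zp_approx_by_nat:
  assumes z: "absv z \<le> 1"
  shows "\<exists>m < p ^ N. absv (z - of_nat m) \<le> (1 / real p) ^ N"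
proof -
  obtain q :: rat where q: "absv (z - of_rat q) < (1 / real p) ^ N"
    using rat_dense[rule_format, of "(1 / real p) ^ N" z] p_gt_1 by auto
  have "(1 / real p) ^ N \<le> 1"
    using p_gt_1 by (simp add: power_le_one)
  then have "absv (of_rat q :: 'a) \<le> 1"
    using absv_diff_le_max[of "of_rat q" 0 z] z q absv_minus_commute[of z] by simp
  then obtain m where "m < p ^ N" "absv ((of_rat q :: 'a) - of_nat m) \<le> (1 / real p) ^ N"
    using rat_approx_by_nat by blast
  moreover have "absv (z - of_nat m) \<le> max (absv (z - of_rat q)) (absv (of_rat q - of_nat m))"
    by (rule absv_diff_le_max)
  ultimately show ?thesis
    using q by (intro exI[of _ m]) auto
qed

lemma ball_finite_net:
  assumes "0 < \<delta>"
  obtains F where "finite F" "\<And>y. y \<in> F \<Longrightarrow> absv y \<le> real p powr (- real_of_int L)"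
    "\<And>x. absv x \<le> real p powr (- real_of_int L) \<Longrightarrow> \<exists>y\<in>F. absv (x - y) < \<delta>"
proof -
  define \<rho> where "\<rho> = real p powr (- real_of_int L)"
  have \<rho>: "0 < \<rho>" "absv (of_nat p powi L :: 'a) = \<rho>"
    unfolding \<rho>_def using p_gt_1 absv_p_powi by auto
  obtain N where N: "(1 / real p) ^ N < \<delta> / \<rho>"
    using real_arch_pow_inv[of "\<delta> / \<rho>" "1 / real p"] assms \<rho>(1) p_gt_1 by auto
  define F where "F = (\<lambda>m. of_nat p powi L * of_nat m :: 'a) ` {..<p ^ N}"
  have "\<exists>y\<in>F. absv (x - y) < \<delta>" if x: "absv x \<le> \<rho>" for x
  proof -
    define z where "z = of_nat p powi (- L) * x"
    have xz: "x = of_nat p powi L * z"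
      unfolding z_def using p_gt_1 by (simp add: power_int_minus)
    then have "absv z \<le> 1"
      using x \<rho> by (simp add: absv_mult)
    then obtain m where m: "m < p ^ N" "absv (z - of_nat m) \<le> (1 / real p) ^ N"
      using Zp_approx_by_nat by blast
    have "absv (x - of_nat p powi L * of_nat m) = \<rho> * absv (z - of_nat m)"
      unfolding xz right_diff_distrib[symmetric] absv_mult \<rho>(2) ..
    also have "\<dots> < \<rho> * (\<delta> / \<rho>)"
      using m(2) N \<rho>(1) by (intro mult_strict_left_mono) auto
    finally show ?thesis
      using m(1) \<rho>(1) unfolding F_def by auto
  qed
  moreover have "absv y \<le> \<rho>" if "y \<in> F" for y
    using that absv_of_nat_le_1 \<rho> unfolding F_def by (auto simp: absv_mult)
  ultimately show ?thesis
    using that[of F] unfolding F_def \<rho>_def by blast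
qed

lemma mcomplete_mat_dist: "Metric_space.mcomplete (Mn n) (mat_dist n)"
proof -
  interpret M: Metric_space "Mn n" "mat_dist n"
    by (rule Metric_space_mat_dist)
  show ?thesis
    unfolding M.mcomplete_def
  proof (intro allI impI)
    fix \<sigma> assume "M.MCauchy \<sigma>"
    then have \<sigma>: "\<And>m. \<sigma> m \<in> Mn n" "\<And>e. 0 < e \<Longrightarrow> \<exists>N. \<forall>m m'. N \<le> m \<longrightarrow> N \<le> m' \<longrightarrow> mat_dist n (\<sigma> m) (\<sigma> m') < e"
      unfolding M.MCauchy_def by blast+
    have "\<exists>x. \<forall>e>0. \<exists>N. \<forall>m\<ge>N. absv (\<sigma> m j k - x) < e" if jk: "j \<in> {1..n}" "k \<in> {1..n}" for j k
    proof -
      have "\<forall>e>0. \<exists>N. \<forall>m\<ge>N. \<forall>m'\<ge>N. absv (\<sigma> m j k - \<sigma> m' j k) < e"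
      proof (intro allI impI)
        fix e :: real assume e: "0 < e"
        obtain N where "\<forall>m m'. N \<le> m \<longrightarrow> N \<le> m' \<longrightarrow> mat_dist n (\<sigma> m) (\<sigma> m') < e"
          using \<sigma>(2)[OF e] by blast
        then show "\<exists>N. \<forall>m\<ge>N. \<forall>m'\<ge>N. absv (\<sigma> m j k - \<sigma> m' j k) < e"
          using absv_entry_le_mat_dist[OF jk] by (meson order.strict_trans1)
      qed
      then show ?thesis
        using absv_complete[rule_format, of "\<lambda>m. \<sigma> m j k"] by simp
    qed
    then obtain L where L: "\<And>j k e. j \<in> {1..n} \<Longrightarrow> k \<in> {1..n} \<Longrightarrow> 0 < e \<Longrightarrow> \<exists>N. \<forall>m\<ge>N. absv (\<sigma> m j k - L j k) < e"
      by metis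
    define L' where "L' = (\<lambda>j k. if j \<in> {1..n} \<and> k \<in> {1..n} then L j k else 0)"
    have "L' \<in> Mn n"
      unfolding L'_def Mn_def by auto
    moreover have "\<exists>N. \<forall>m\<ge>N. absv (\<sigma> m j k - L' j k) < e" if "j \<in> {1..n}" "k \<in> {1..n}" "0 < e" for j k e
      using L[OF that] that(1,2) unfolding L'_def by simp
    ultimately have "limitin (Mn_top absv n) \<sigma> L' sequentially"
      by (rule limitin_Mn_top_entrywise[OF \<sigma>(1)])
    then show "\<exists>x. limitin M.mtopology \<sigma> x sequentially"
      unfolding Mn_top_eq_mtopology by blast
  qed
qed

lemma mtotally_bounded_entry_ball:
  "Metric_space.mtotally_bounded (Mn n) (mat_dist n) (entry_ball n C (\<lambda>j k. real p powr (- real_of_int L)))"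
proof -
  interpret M: Metric_space "Mn n" "mat_dist n"
    by (rule Metric_space_mat_dist)
  let ?B = "entry_ball n C (\<lambda>j k. real p powr (- real_of_int L))"
  show ?thesis
    unfolding M.mtotally_bounded_def
  proof (intro allI impI)
    fix \<epsilon> :: real assume \<epsilon>: "0 < \<epsilon>"
    define \<delta> where "\<delta> = \<epsilon> / (real n * real n + 1)"
    have "0 < \<delta>"
      unfolding \<delta>_def using \<epsilon> by (intro divide_pos_pos add_nonneg_pos) auto
    then obtain F where F: "finite F" "\<And>y. y \<in> F \<Longrightarrow> absv y \<le> real p powr (- real_of_int L)"
      "\<And>x. absv x \<le> real p powr (- real_of_int L) \<Longrightarrow> \<exists>y\<in>F. absv (x - y) < \<delta>"
      using ball_finite_net[where L = L] by blast
    have "\<exists>G. finite G \<and> G \<subseteq> ?B \<and> (\<forall>A\<in>?B. \<exists>B\<in>G. \<forall>j\<in>{1..n}. \<forall>k\<in>{1..n}. absv (B j k - A j k) < \<delta>)"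
      using F by (rule entry_ball_finite_net)
    then obtain G where G: "finite G" "G \<subseteq> ?B"
      "\<And>A. A \<in> ?B \<Longrightarrow> \<exists>B\<in>G. \<forall>j\<in>{1..n}. \<forall>k\<in>{1..n}. absv (B j k - A j k) < \<delta>"
      by blast
    have "A \<in> (\<Union>B\<in>G. M.mball B \<epsilon>)" if A: "A \<in> ?B" for A
    proof -
      obtain B where B: "B \<in> G" "\<forall>j\<in>{1..n}. \<forall>k\<in>{1..n}. absv (B j k - A j k) < \<delta>"
        using G(3)[OF A] by blast
      then have "mat_dist n B A < \<epsilon>"
        unfolding \<delta>_def by (intro mat_dist_less \<epsilon>) (auto intro: less_imp_le)
      moreover have "A \<in> Mn n" "B \<in> Mn n"
        using A B(1) G(2) entry_ball_subset_Mn by blast+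
      ultimately show ?thesis
        using B(1) by auto
    qed
    then show "\<exists>K. finite K \<and> K \<subseteq> ?B \<and> ?B \<subseteq> (\<Union>x\<in>K. M.mball x \<epsilon>)"
      using G(1,2) by blast
  qed
qed

lemma radius_le_p_powr:
  fixes R :: "nat \<Rightarrow> nat \<Rightarrow> real"
  obtains L where "\<And>j k. j \<in> {1..n} \<Longrightarrow> k \<in> {1..n} \<Longrightarrow> R j k \<le> real p powr (- real_of_int L)"
proof -
  define b where "b = Max (insert 0 {R j k | j k. j \<in> {1..n} \<and> k \<in> {1..n}})"
  have fin: "finite {R j k | j k. j \<in> {1..n} \<and> k \<in> {1..n}}"
    by (rule finite_entries)
  obtain N where "b < real p ^ N"
    using real_arch_pow[of "real p" b] p_gt_1 by auto
  moreover have "R j k \<le> b" if "j \<in> {1..n}" "k \<in> {1..n}" for j k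
    unfolding b_def using fin that by (intro Max_ge) auto
  moreover have "real p ^ N = real p powr (- real_of_int (- int N))"
    using p_gt_1 by (simp add: powr_realpow)
  ultimately show ?thesis
    using that[of "- int N"] by fastforce
qed

lemma compactin_entry_ball: "compactin (Mn_top absv n) (entry_ball n C R)"
proof -
  interpret M: Metric_space "Mn n" "mat_dist n"
    by (rule Metric_space_mat_dist)
  obtain L where "\<And>j k. j \<in> {1..n} \<Longrightarrow> k \<in> {1..n} \<Longrightarrow> R j k \<le> real p powr (- real_of_int L)"
    using radius_le_p_powr by blast
  then have "entry_ball n C R \<subseteq> entry_ball n C (\<lambda>j k. real p powr (- real_of_int L))"
    unfolding entry_ball_def by force
  then have "M.mtotally_bounded (entry_ball n C R)"
    using mtotally_bounded_entry_ball M.mtotally_bounded_subset by blast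
  then have "compactin M.mtopology (M.mtopology closure_of entry_ball n C R)"
    using M.mtotally_bounded_eq_compact_closure_of[OF mcomplete_mat_dist] by blast
  then show ?thesis
    using closedin_entry_ball unfolding Mn_top_eq_mtopology by (simp add: closure_of_closedin)
qed

lemma compactin_superdiag_bounded:
  assumes "\<And>j k. j < k \<Longrightarrow> C j k = 0"
  shows "compactin (subtopology (Mn_top absv n) (strict_upper_coset n C)) (superdiag_bounded n r (strict_upper_coset n C))"
proof -
  have "superdiag_bounded n r (strict_upper_coset n C) = entry_ball n C (\<lambda>j k. if j < k then r (k - j) else 0)"
    by (rule superdiag_bounded_coset_eq_entry_ball) (rule assms)
  then show ?thesis
    unfolding compactin_subtopology using compactin_entry_ball entry_ball_subset_coset by simp
qed

end

section \<open>Compact open subgroups of \<open>T\<^sup>+(n, \<rat>\<^sub>p)\<close>\<close>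

lemma powr_inverse_le_iff:
  assumes "0 < d" "0 \<le> x" "0 \<le> \<rho>"
  shows "x powr (1 / real d) \<le> \<rho> \<longleftrightarrow> x \<le> \<rho> ^ d"
proof -
  have "x powr (1 / real d) = root d x"
    using assms by (simp add: powr_inverse_root)
  moreover have "\<rho> = root d (\<rho> ^ d)"
    using assms by (simp add: real_root_power_cancel)
  ultimately show ?thesis
    using assms(1) by (metis real_root_le_iff)
qed

context nonarch_field
begin

lemma delta_image_superdiag_bounded:
  assumes "c \<noteq> 0"
  shows "delta c ` superdiag_bounded n r (T_plus n) = superdiag_bounded n (\<lambda>d. absv c ^ d * r d) (T_plus n)"
proof (intro equalityI subsetI)
  fix B assume "B \<in> delta c ` superdiag_bounded n r (T_plus n)"
  then obtain A where "A \<in> superdiag_bounded n r (T_plus n)" "B = delta c A"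
    by blast
  then show "B \<in> superdiag_bounded n (\<lambda>d. absv c ^ d * r d) (T_plus n)"
    unfolding superdiag_bounded_def delta_def
    by (auto simp: absv_mult absv_power delta_in_T_plus[unfolded delta_def] intro: mult_left_mono)
next
  fix B assume B: "B \<in> superdiag_bounded n (\<lambda>d. absv c ^ d * r d) (T_plus n)"
  have "absv (inverse c ^ (k - j) * B j k) \<le> r (k - j)" if "1 \<le> j" "j < k" "k \<le> n" for j k
  proof -
    have "absv c ^ (k - j) * absv (inverse c ^ (k - j) * B j k) = absv (B j k)"
      using assms by (simp add: absv_mult absv_power absv_inverse power_inverse)
    also have "\<dots> \<le> absv c ^ (k - j) * r (k - j)"
      using B that unfolding superdiag_bounded_def by blast
    finally show ?thesis
      using assms mult_le_cancel_left_pos[of "absv c ^ (k - j)"] by (simp add: less_le)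
  qed
  then have "delta (inverse c) B \<in> superdiag_bounded n r (T_plus n)"
    using B delta_in_T_plus unfolding superdiag_bounded_def by (auto simp: delta_def)
  moreover have "B = delta c (delta (inverse c) B)"
    using assms by (simp add: delta_delta)
  ultimately show "B \<in> delta c ` superdiag_bounded n r (T_plus n)"
    by blast
qed

lemma T_plus_Zp_eq: "T_plus_Zp absv n = superdiag_bounded n (\<lambda>d. 1) (T_plus n)"
  unfolding T_plus_Zp_def superdiag_bounded_def Zp_def by simp

lemma Max_root_le_iff:
  assumes "2 \<le> n" "0 \<le> \<rho>"
  shows "Max {absv (A j k) powr (1 / real (k - j)) | j k. 1 \<le> j \<and> j < k \<and> k \<le> n} \<le> \<rho>
    \<longleftrightarrow> (\<forall>j k. 1 \<le> j \<and> j < k \<and> k \<le> n \<longrightarrow> absv (A j k) \<le> \<rho> ^ (k - j))"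
proof -
  let ?E = "{absv (A j k) powr (1 / real (k - j)) | j k. 1 \<le> j \<and> j < k \<and> k \<le> n}"
  have "?E \<subseteq> {absv (A j k) powr (1 / real (k - j)) | j k. j \<in> {1..n} \<and> k \<in> {1..n}}"
  proof
    fix x assume "x \<in> ?E"
    then obtain j k where "x = absv (A j k) powr (1 / real (k - j))" "1 \<le> j" "j < k" "k \<le> n"
      by blast
    moreover from this have "j \<in> {1..n}" "k \<in> {1..n}"
      by auto
    ultimately show "x \<in> {absv (A j k) powr (1 / real (k - j)) | j k. j \<in> {1..n} \<and> k \<in> {1..n}}"
      by blast
  qed
  then have "finite ?E"
    using finite_entries finite_subset by fast
  moreover have "absv (A 1 2) powr (1 / real (2 - 1)) \<in> ?E"
    using assms(1) by fastforce
  ultimately have "Max ?E \<le> \<rho> \<longleftrightarrow> (\<forall>x\<in>?E. x \<le> \<rho>)"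
    by (intro Max_le_iff) auto
  also have "\<dots> \<longleftrightarrow> (\<forall>j k. 1 \<le> j \<and> j < k \<and> k \<le> n \<longrightarrow> absv (A j k) powr (1 / real (k - j)) \<le> \<rho>)"
    by blast
  also have "\<dots> \<longleftrightarrow> (\<forall>j k. 1 \<le> j \<and> j < k \<and> k \<le> n \<longrightarrow> absv (A j k) \<le> \<rho> ^ (k - j))"
    using powr_inverse_le_iff[OF _ absv_nonneg assms(2)] by (metis zero_less_diff)
  finally show ?thesis .
qed

end

context padic
begin

lemma superdiag_bounded_eq_pZp:
  "{B \<in> T. \<forall>j k. 1 \<le> j \<and> j < k \<and> k \<le> n \<longrightarrow> B j k \<in> pZp p absv (l (k - j))}
    = superdiag_bounded n (\<lambda>d. real p powr (- real_of_int (l d))) T"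
  unfolding superdiag_bounded_def pZp_iff ..

lemma compact_open_superdiag_bounded:
  assumes "\<And>d. 0 < r d"
  shows "compactin (Tn_plus_top absv n) (superdiag_bounded n r (Tn_plus n))"
    and "openin (Tn_plus_top absv n) (superdiag_bounded n r (Tn_plus n))"
    and "compactin (T_plus_top absv n) (superdiag_bounded n r (T_plus n))"
    and "openin (T_plus_top absv n) (superdiag_bounded n r (T_plus n))"
  unfolding Tn_plus_top_def T_plus_top_def Tn_plus_eq_coset T_plus_eq_coset
  by (intro compactin_superdiag_bounded openin_superdiag_bounded assms; simp add: mat_one_def)+

lemma delta_p_powi_image:
  "delta (of_nat p powi m) ` T_plus_Zp absv n = superdiag_bounded n (\<lambda>d. (real p powr - real_of_int m) ^ d) (T_plus n)"
  unfolding T_plus_Zp_eq using p_gt_1 by (simp add: delta_image_superdiag_bounded absv_p_powi)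

lemma Max_root_le_p_powr_eq:
  assumes "2 \<le> n"
  shows "{A \<in> T_plus n. Max {absv (A j k) powr (1 / real (k - j)) | j k. 1 \<le> j \<and> j < k \<and> k \<le> n}
      \<le> real p powr (- real_of_int m)} = superdiag_bounded n (\<lambda>d. (real p powr - real_of_int m) ^ d) (T_plus n)"
  using Max_root_le_iff[OF assms] unfolding superdiag_bounded_def by auto

lemma delta_p_powi_compact_open_subgroup:
  "subgroup (delta (of_nat p powi m) ` T_plus_Zp absv n) (T_plus_group n)
    \<and> compactin (T_plus_top absv n) (delta (of_nat p powi m) ` T_plus_Zp absv n)
    \<and> openin (T_plus_top absv n) (delta (of_nat p powi m) ` T_plus_Zp absv n)"
proof -
  have "0 < (real p powr - real_of_int m) ^ d" for d
    using p_gt_1 by simp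
  moreover have "(real p powr - real_of_int m) ^ \<alpha> * (real p powr - real_of_int m) ^ \<beta>
      \<le> (real p powr - real_of_int m) ^ (\<alpha> + \<beta>)" for \<alpha> \<beta>
    by (simp add: power_add)
  ultimately show ?thesis
    unfolding delta_p_powi_image
    using subgroup_superdiag_bounded compact_open_superdiag_bounded less_imp_le by metis
qed

lemma large_compact_open_subgroups:
  "has_large_compact_open_subgroups (T_plus_top absv n) (T_plus_group n :: 'a mat_fn monoid)"
  unfolding has_large_compact_open_subgroups_def
proof (intro allI impI)
  fix K assume K: "compactin (T_plus_top absv n) K"
  then have "K \<subseteq> T_plus n" "compactin (Mn_top absv n) K"
    unfolding T_plus_top_def compactin_subtopology by blast+
  then obtain b where b: "\<And>A j k. A \<in> K \<Longrightarrow> j \<in> {1..n} \<Longrightarrow> k \<in> {1..n} \<Longrightarrow> absv (A j k) \<le> b"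
    using compactin_entries_bounded by blast
  obtain N where N: "b < real p ^ N"
    using real_arch_pow[of "real p" b] p_gt_1 by auto
  have "absv (A j k) \<le> (real p powr - real_of_int (- int N)) ^ (k - j)"
    if "A \<in> K" "1 \<le> j" "j < k" "k \<le> n" for A j k
  proof -
    have "absv (A j k) \<le> real p ^ N"
      using b[of A j k] that N by force
    also have "\<dots> \<le> (real p ^ N) ^ (k - j)"
      using power_increasing[of 1 "k - j" "real p ^ N"] p_gt_1 that by simp
    finally show ?thesis
      using p_gt_1 by (simp add: powr_realpow)
  qed
  then have "K \<subseteq> delta (of_nat p powi (- int N)) ` T_plus_Zp absv n"
    unfolding delta_p_powi_image superdiag_bounded_def using \<open>K \<subseteq> T_plus n\<close> by blast
  then show "\<exists>H. subgroup H (T_plus_group n) \<and> compactin (T_plus_top absv n) H \<and> openin (T_plus_top absv n) H \<and> K \<subseteq> H"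
    using delta_p_powi_compact_open_subgroup by blast
qed

end

theorem mainTheorem7:
  fixes p n :: nat and l :: "nat \<Rightarrow> int" and absv :: "'a::field_char_0 \<Rightarrow> real"
  assumes "prime p" and "n \<ge> 2" and "padic_field p absv"
    and "\<forall>\<alpha> \<beta>. 1 \<le> \<alpha> \<and> 1 \<le> \<beta> \<and> \<alpha> + \<beta> \<le> n - 1 \<longrightarrow> l (\<alpha> + \<beta>) \<le> l \<alpha> + l \<beta>"
  shows
    "is_subring_Tn n {B \<in> Tn_plus n. \<forall>j k. 1 \<le> j \<and> j < k \<and> k \<le> n \<longrightarrow> B j k \<in> pZp p absv (l (k - j))}
     \<and> compactin (Tn_plus_top absv n)
         {B \<in> Tn_plus n. \<forall>j k. 1 \<le> j \<and> j < k \<and> k \<le> n \<longrightarrow> B j k \<in> pZp p absv (l (k - j))}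
     \<and> openin (Tn_plus_top absv n)
         {B \<in> Tn_plus n. \<forall>j k. 1 \<le> j \<and> j < k \<and> k \<le> n \<longrightarrow> B j k \<in> pZp p absv (l (k - j))}
     \<and> subgroup {A \<in> T_plus n. \<forall>j k. 1 \<le> j \<and> j < k \<and> k \<le> n \<longrightarrow> A j k \<in> pZp p absv (l (k - j))}
         (T_plus_group n)
     \<and> compactin (T_plus_top absv n)
         {A \<in> T_plus n. \<forall>j k. 1 \<le> j \<and> j < k \<and> k \<le> n \<longrightarrow> A j k \<in> pZp p absv (l (k - j))}
     \<and> openin (T_plus_top absv n)
         {A \<in> T_plus n. \<forall>j k. 1 \<le> j \<and> j < k \<and> k \<le> n \<longrightarrow> A j k \<in> pZp p absv (l (k - j))}
     \<and> (\<forall>m::int.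
          {A \<in> T_plus n. Max {absv (A j k) powr (1 / real (k - j)) | j k. 1 \<le> j \<and> j < k \<and> k \<le> n}
                           \<le> real p powr (- real_of_int m)}
            = delta ((of_nat p) powi m) ` T_plus_Zp absv n
          \<and> subgroup (delta ((of_nat p) powi m) ` T_plus_Zp absv n) (T_plus_group n)
          \<and> compactin (T_plus_top absv n) (delta ((of_nat p) powi m) ` T_plus_Zp absv n)
          \<and> openin (T_plus_top absv n) (delta ((of_nat p) powi m) ` T_plus_Zp absv n))
     \<and> has_large_compact_open_subgroups (T_plus_top absv n) (T_plus_group n :: 'a mat_fn monoid)"
proof -
  interpret padic p absv
    using assms(1,3) by unfold_locales
  define \<rho> where "\<rho> d = real p powr (- real_of_int (l d))" for d
  have \<rho>_pos: "0 < \<rho> d" for d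
    unfolding \<rho>_def using p_gt_1 by simp
  have \<rho>_submult: "\<rho> \<alpha> * \<rho> \<beta> \<le> \<rho> (\<alpha> + \<beta>)" if "1 \<le> \<alpha>" "1 \<le> \<beta>" "\<alpha> + \<beta> \<le> n - 1" for \<alpha> \<beta>
    using assms(4)[rule_format, of \<alpha> \<beta>] that p_gt_1 unfolding \<rho>_def by (simp add: powr_add[symmetric])
  show ?thesis
    unfolding superdiag_bounded_eq_pZp \<rho>_def[symmetric]
    using superdiag_bounded_subring[OF less_imp_le[OF \<rho>_pos] \<rho>_submult]
      subgroup_superdiag_bounded[OF less_imp_le[OF \<rho>_pos] \<rho>_submult]
      compact_open_superdiag_bounded[OF \<rho>_pos] Max_root_le_p_powr_eq[OF assms(2)] delta_p_powi_image
      delta_p_powi_compact_open_subgroup large_compact_open_subgroups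
    by auto
qed

end
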